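(* Let $S$ be a finite $2$-group and suppose there are $A,B\in\mathcal{A}(S)$ with $AB=S$. If $C_B(a)=A\cap B$ for every $a\in A\setminus(A\cap B)$, then $\mathcal{A}(S)=\{A,B\}$ and every involution of $S$ lies in $A\cup B$.
   Context: For a $p$-group $S$, $\mathcal{A}(S)$ denotes the set of elementary abelian subgroups of $S$ of maximal rank (maximal order). *)

theory Defs
  imports "HOL-Algebra.Algebra"
begin

definition finite_p_group :: "('a, 'b) monoid_scheme \<Rightarrow> nat \<Rightarrow> bool" where
  "finite_p_group G p \<longleftrightarrow> group G \<and> Factorial_Ring.prime p \<and> finite (carrier G) \<and> (\<exists>n. order G = p ^ n)"

definition elem_abelian_sub :: "('a, 'b) monoid_scheme \<Rightarrow> nat \<Rightarrow> 'a set \<Rightarrow> bool" where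
  "elem_abelian_sub G p E \<longleftrightarrow> subgroup E G \<and>
     (\<forall>x\<in>E. \<forall>y\<in>E. x \<otimes>\<^bsub>G\<^esub> y = y \<otimes>\<^bsub>G\<^esub> x) \<and>
     (\<forall>x\<in>E. x [^]\<^bsub>G\<^esub> p = \<one>\<^bsub>G\<^esub>)"

text \<open>\<open>\<A>(S)\<close>: elementary abelian subgroups of maximal order (equivalently maximal rank).\<close>
definition max_elem_abelian :: "('a, 'b) monoid_scheme \<Rightarrow> nat \<Rightarrow> 'a set set" where
  "max_elem_abelian G p = {E. elem_abelian_sub G p E \<and>
     (\<forall>F. elem_abelian_sub G p F \<longrightarrow> card F \<le> card E)}"

definition centralizer_in :: "('a, 'b) monoid_scheme \<Rightarrow> 'a set \<Rightarrow> 'a \<Rightarrow> 'a set" where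
  "centralizer_in G B a = {b \<in> B. a \<otimes>\<^bsub>G\<^esub> b = b \<otimes>\<^bsub>G\<^esub> a}"

definition involutions :: "('a, 'b) monoid_scheme \<Rightarrow> 'a set" where
  "involutions G = {x \<in> carrier G. x \<noteq> \<one>\<^bsub>G\<^esub> \<and> x [^]\<^bsub>G\<^esub> (2::nat) = \<one>\<^bsub>G\<^esub>}"

end

theory Submission
  imports Defs
begin

text \<open>Every involution \<open>x\<close> of \<open>S\<close> factors as \<open>x = a b\<close> with \<open>a \<in> A\<close>, \<open>b \<in> B\<close>.
  Since \<open>a\<close>, \<open>b\<close> and \<open>a b\<close> all square to \<open>1\<close>, \<open>a\<close> and \<open>b\<close> commute; so if \<open>a \<notin> B\<close>,
  the centralizer hypothesis puts \<open>b\<close> into \<open>A\<close>, and in every case \<open>x \<in> A \<union> B\<close>.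
  An elementary abelian subgroup \<open>E\<close> therefore lies in \<open>A \<union> B\<close>, hence (being a group)
  in \<open>A\<close> or in \<open>B\<close>, and if \<open>E\<close> has maximal order it equals that subgroup.\<close>

lemma (in group) nat_pow_two: "x \<in> carrier G \<Longrightarrow> x [^] (2::nat) = x \<otimes> x"
  by (simp add: numeral_2_eq_2 nat_pow_Suc)

lemma (in group) involutions_product_commute:
  assumes a: "a \<in> carrier G" "a \<otimes> a = \<one>" and b: "b \<in> carrier G" "b \<otimes> b = \<one>"
    and ab: "(a \<otimes> b) \<otimes> (a \<otimes> b) = \<one>"
  shows "a \<otimes> b = b \<otimes> a"
proof -
  have "b \<otimes> a = (a \<otimes> a) \<otimes> (b \<otimes> a) \<otimes> (b \<otimes> b)"
    by (simp only: a b l_one r_one m_closed)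
  also have "\<dots> = a \<otimes> ((a \<otimes> b) \<otimes> (a \<otimes> b)) \<otimes> b"
    using a(1) b(1) by (simp add: m_assoc)
  also have "\<dots> = a \<otimes> b"
    using a b ab by simp
  finally show ?thesis by simp
qed

lemma (in group) subgroup_subset_Un_subgroups:
  assumes E: "subgroup E G" and A: "subgroup A G" and B: "subgroup B G"
    and "E \<subseteq> A \<union> B"
  shows "E \<subseteq> A \<or> E \<subseteq> B"
proof (rule ccontr)
  assume "\<not> (E \<subseteq> A \<or> E \<subseteq> B)"
  then obtain x y where x: "x \<in> E" "x \<notin> A" and y: "y \<in> E" "y \<notin> B" by blast
  with \<open>E \<subseteq> A \<union> B\<close> have xB: "x \<in> B" and yA: "y \<in> A" by blast+
  have xc: "x \<in> carrier G" and yc: "y \<in> carrier G"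
    using x y subgroup.subset[OF E] by blast+
  have "x \<otimes> y \<in> A \<or> x \<otimes> y \<in> B"
    using subgroup.m_closed[OF E x(1) y(1)] \<open>E \<subseteq> A \<union> B\<close> by blast
  then show False
  proof
    assume "x \<otimes> y \<in> A"
    then have "(x \<otimes> y) \<otimes> inv y \<in> A"
      using A yA by (simp add: subgroup.m_closed subgroup.m_inv_closed)
    with xc yc x show False by (simp add: m_assoc)
  next
    assume "x \<otimes> y \<in> B"
    then have "inv x \<otimes> (x \<otimes> y) \<in> B"
      using B xB by (simp add: subgroup.m_closed subgroup.m_inv_closed)
    with xc yc y show False by (simp add: m_assoc[symmetric])
  qed
qed

lemma (in group) square_one_in_Un_of_product:
  assumes A: "subgroup A G" "\<forall>a\<in>A. a [^] (2::nat) = \<one>"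
    and B: "subgroup B G" "\<forall>b\<in>B. b [^] (2::nat) = \<one>"
    and AB: "A <#> B = carrier G"
    and centralizer: "\<forall>a \<in> A - (A \<inter> B). centralizer_in G B a = A \<inter> B"
    and x: "x \<in> carrier G" "x [^] (2::nat) = \<one>"
  shows "x \<in> A \<union> B"
proof -
  from x(1) AB obtain a b where ab: "a \<in> A" "b \<in> B" "x = a \<otimes> b"
    unfolding set_mult_def by blast
  have ac: "a \<in> carrier G" and bc: "b \<in> carrier G"
    using ab A(1) B(1) subgroup.subset by blast+
  show ?thesis
  proof (cases "a \<in> B")
    case True
    then show ?thesis using ab B(1) by (simp add: subgroup.m_closed)
  next
    case False
    have "a \<otimes> b = b \<otimes> a"
    proof (rule involutions_product_commute[OF ac _ bc])
      show "a \<otimes> a = \<one>"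
        using A(2) ab(1) ac nat_pow_two by metis
      show "b \<otimes> b = \<one>"
        using B(2) ab(2) bc nat_pow_two by metis
      show "(a \<otimes> b) \<otimes> (a \<otimes> b) = \<one>"
        using ab x by (simp add: nat_pow_two)
    qed
    then have "b \<in> centralizer_in G B a"
      using ab unfolding centralizer_in_def by simp
    then have "b \<in> A" using centralizer ab False by auto
    then show ?thesis using ab A(1) by (simp add: subgroup.m_closed)
  qed
qed

lemma max_elem_abelian_subset_eq:
  assumes "E \<in> max_elem_abelian G p" "elem_abelian_sub G p A" "finite A" "E \<subseteq> A"
  shows "E = A"
proof -
  have "card A \<le> card E"
    using assms(1,2) unfolding max_elem_abelian_def by blast
  with card_mono[OF assms(3,4)] have "card E = card A" by (rule antisym)
  then show ?thesis by (rule card_subset_eq[OF assms(3,4)])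
qed

theorem mainTheorem5:
  fixes S :: "('a, 'b) monoid_scheme" and A B :: "'a set"
  assumes "finite_p_group S 2"
    and "A \<in> max_elem_abelian S 2" and "B \<in> max_elem_abelian S 2"
    and "A <#>\<^bsub>S\<^esub> B = carrier S"
    and "\<forall>a \<in> A - (A \<inter> B). centralizer_in S B a = A \<inter> B"
  shows "max_elem_abelian S 2 = {A, B} \<and> involutions S \<subseteq> A \<union> B"
proof -
  interpret group S using assms(1) unfolding finite_p_group_def by blast
  have fin: "finite (carrier S)" using assms(1) unfolding finite_p_group_def by blast
  have eA: "elem_abelian_sub S 2 A" and eB: "elem_abelian_sub S 2 B"
    using assms(2,3) unfolding max_elem_abelian_def by auto
  then have sA: "subgroup A S" and A2: "\<forall>a\<in>A. a [^]\<^bsub>S\<^esub> (2::nat) = \<one>\<^bsub>S\<^esub>"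
    and sB: "subgroup B S" and B2: "\<forall>b\<in>B. b [^]\<^bsub>S\<^esub> (2::nat) = \<one>\<^bsub>S\<^esub>"
    unfolding elem_abelian_sub_def by auto
  note square_one = square_one_in_Un_of_product[OF sA A2 sB B2 assms(4,5)]
  have "E \<in> {A, B}" if E: "E \<in> max_elem_abelian S 2" for E
  proof -
    have sE: "subgroup E S" and E2: "\<forall>x\<in>E. x [^]\<^bsub>S\<^esub> (2::nat) = \<one>\<^bsub>S\<^esub>"
      using E unfolding max_elem_abelian_def elem_abelian_sub_def by auto
    have "E \<subseteq> A \<union> B"
      using square_one E2 subgroup.subset[OF sE] by blast
    then have "E \<subseteq> A \<or> E \<subseteq> B"
      by (rule subgroup_subset_Un_subgroups[OF sE sA sB])
    moreover have "finite A" "finite B"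
      using fin finite_subset subgroup.subset[OF sA] subgroup.subset[OF sB] by blast+
    ultimately show ?thesis
      using max_elem_abelian_subset_eq[OF E eA] max_elem_abelian_subset_eq[OF E eB] by blast
  qed
  moreover have "involutions S \<subseteq> A \<union> B"
    using square_one unfolding involutions_def by blast
  ultimately show ?thesis using assms(2,3) by blast
qed

end
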